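(* Let $A$ be a partially ordered set and let $G$ be a passable game over $A$. If $G'$ is the canonical form of $G$ (a game in canonical form with $G'\equiv G$), then $G'$ is passable.
   Context: Games over a poset $A$ are defined inductively: for each $a\in A$ there is an atomic game $[a]$, which has no options; and if $L$ and $R$ are non-empty sets of games, then $\{L\mid R\}$ is a composite game with left options $L$ and right options $R$. The relations $\le$ and $\lhd$ are defined by simultaneous recursion: $G\le H$ iff (1) every left option $G^L$ of $G$ satisfies $G^L\lhd H$, (2) every right option $H^R$ of $H$ satisfies $G\lhd H^R$, and (3) if $G$ or $H$ is atomic then $G\lhd H$; and $G\lhd H$ iff (1) some right option $G^R$ of $G$ satisfies $G^R\le H$, or (2) some left option $H^L$ of $H$ satisfies $G\le H^L$, or (3) $G=[a]$, $H=[b]$ are atomic and $a\le b$. $G\equiv H$ means $G\le H$ and $H\le G$. A game $G$ is passable if $G\lhd G$ and recursively all its options are passable. Canonical form: among distinct left options $H,K$ of $G$, $K$ is dominated if $K\le H$; among distinct right options $H,K$, $K$ is dominated if $H\le K$. A left option $H$ of $G$ is reversible if $H$ has a right option $K$ with $K\le G$; a right option $H$ of $G$ is reversible if $H$ has a left option $K$ with $G\le K$. An option $H$ of $G$ is a passing option if $H\equiv G$. $G$ is in canonical form if it has no dominated, reversible or passing options and all its options are in canonical form. *)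

theory Defs
  imports Main "HOL-Library.FSet"
begin

datatype 'a game = Atom 'a | Comp "'a game fset" "'a game fset"

fun left_opts :: "'a game \<Rightarrow> 'a game fset" where
  "left_opts (Atom a) = {||}"
| "left_opts (Comp L R) = L"

fun right_opts :: "'a game \<Rightarrow> 'a game fset" where
  "right_opts (Atom a) = {||}"
| "right_opts (Comp L R) = R"

fun is_atom :: "'a game \<Rightarrow> bool" where
  "is_atom (Atom a) = True"
| "is_atom (Comp L R) = False"

inductive wf_game :: "'a game \<Rightarrow> bool" where
  wf_atom: "wf_game (Atom a)"
| wf_comp: "L \<noteq> {||} \<Longrightarrow> R \<noteq> {||} \<Longrightarrow> (\<forall>x. x |\<in>| L \<longrightarrow> wf_game x)
    \<Longrightarrow> (\<forall>x. x |\<in>| R \<longrightarrow> wf_game x) \<Longrightarrow> wf_game (Comp L R)"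

inductive game_le :: "'a::order game \<Rightarrow> 'a game \<Rightarrow> bool"
  and game_lf :: "'a::order game \<Rightarrow> 'a game \<Rightarrow> bool" where
  le_intro: "(\<forall>GL. GL |\<in>| left_opts G \<longrightarrow> game_lf GL H)
    \<Longrightarrow> (\<forall>HR. HR |\<in>| right_opts H \<longrightarrow> game_lf G HR)
    \<Longrightarrow> (is_atom G \<or> is_atom H \<longrightarrow> game_lf G H)
    \<Longrightarrow> game_le G H"
| lf_right: "GR |\<in>| right_opts G \<Longrightarrow> game_le GR H \<Longrightarrow> game_lf G H"
| lf_left: "HL |\<in>| left_opts H \<Longrightarrow> game_le G HL \<Longrightarrow> game_lf G H"
| lf_atom: "a \<le> b \<Longrightarrow> game_lf (Atom a) (Atom b)"

definition game_equiv :: "'a::order game \<Rightarrow> 'a game \<Rightarrow> bool" where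
  "game_equiv G H \<longleftrightarrow> game_le G H \<and> game_le H G"

inductive passable :: "'a::order game \<Rightarrow> bool" where
  "game_lf G G \<Longrightarrow> (\<forall>x. x |\<in>| left_opts G \<longrightarrow> passable x)
    \<Longrightarrow> (\<forall>x. x |\<in>| right_opts G \<longrightarrow> passable x) \<Longrightarrow> passable G"

inductive canonical :: "'a::order game \<Rightarrow> bool" where
  "(\<forall>H K. H |\<in>| left_opts G \<longrightarrow> K |\<in>| left_opts G \<longrightarrow> H \<noteq> K \<longrightarrow> \<not> game_le K H)
    \<Longrightarrow> (\<forall>H K. H |\<in>| right_opts G \<longrightarrow> K |\<in>| right_opts G \<longrightarrow> H \<noteq> K \<longrightarrow> \<not> game_le H K)
    \<Longrightarrow> (\<forall>H. H |\<in>| left_opts G \<longrightarrow> \<not> (\<exists>K. K |\<in>| right_opts H \<and> game_le K G))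
    \<Longrightarrow> (\<forall>H. H |\<in>| right_opts G \<longrightarrow> \<not> (\<exists>K. K |\<in>| left_opts H \<and> game_le G K))
    \<Longrightarrow> (\<forall>H. H |\<in>| left_opts G |\<union>| right_opts G \<longrightarrow> \<not> game_equiv H G)
    \<Longrightarrow> (\<forall>x. x |\<in>| left_opts G \<longrightarrow> canonical x)
    \<Longrightarrow> (\<forall>x. x |\<in>| right_opts G \<longrightarrow> canonical x)
    \<Longrightarrow> canonical G"

end

theory Submission
  imports Defs
begin

text \<open>
  From \<open>G \<lhd> G\<close> and \<open>G' \<equiv> G\<close> transitivity gives \<open>G' \<lhd> G'\<close>; by induction on the canonical
  game \<open>G'\<close> it then suffices to show that each option of \<open>G'\<close> is equivalent to a passable game.
  A left option \<open>G'\<^sup>L\<close> satisfies \<open>G'\<^sup>L \<lhd> G \<le> G'\<close>. Unfolding such chains through the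
  options of the passable game \<open>G\<close>, each step either moves to a passable option of \<open>G\<close>, or
  ends at a left option \<open>K\<close> of \<open>G'\<close> with \<open>G'\<^sup>L \<le> K\<close>, so that \<open>K = G'\<^sup>L\<close> (no dominated
  options) and \<open>G'\<^sup>L\<close> is equivalent to the current passable subposition of \<open>G\<close>, or produces a
  right option of \<open>G'\<^sup>L\<close> below \<open>G'\<close>, which is excluded because \<open>G'\<^sup>L\<close> is not reversible.
\<close>

lemma size_fmember_less: "x |\<in>| S \<Longrightarrow> size x < size_fset size S + 1"
  using member_le_sum[of x "fset S" "\<lambda>y. Suc (size y)"] by simp

lemma size_left_opt_less: "GL |\<in>| left_opts G \<Longrightarrow> size GL < size G"
  by (cases G) (auto dest: size_fmember_less)

lemma size_right_opt_less: "GR |\<in>| right_opts G \<Longrightarrow> size GR < size G"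
  by (cases G) (auto dest: size_fmember_less)

lemma game_le_left_lf: "game_le G H \<Longrightarrow> GL |\<in>| left_opts G \<Longrightarrow> game_lf GL H"
  by (auto elim: game_le.cases)

lemma game_le_right_lf: "game_le G H \<Longrightarrow> HR |\<in>| right_opts H \<Longrightarrow> game_lf G HR"
  by (auto elim: game_le.cases)

lemma game_le_atom_lf: "game_le G H \<Longrightarrow> is_atom G \<or> is_atom H \<Longrightarrow> game_lf G H"
  by (auto elim: game_le.cases)

lemma game_le_AtomI: "a \<le> b \<Longrightarrow> game_le (Atom a) (Atom b)"
  by (auto intro: game_le_game_lf.intros)

lemma game_lfE [consumes 1, case_names right left atom]:
  assumes "game_lf G H"
  obtains GR where "GR |\<in>| right_opts G" "game_le GR H"
    | HL where "HL |\<in>| left_opts H" "game_le G HL"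
    | a b where "G = Atom a" "H = Atom b" "a \<le> b"
  using assms by (auto elim: game_lf.cases)

lemma game_le_lf_trans_all:
  fixes G H K :: "'a::order game"
  shows "(game_le G H \<longrightarrow> game_le H K \<longrightarrow> game_le G K) \<and>
    (game_le G H \<longrightarrow> game_lf H K \<longrightarrow> game_lf G K) \<and>
    (game_lf G H \<longrightarrow> game_le H K \<longrightarrow> game_lf G K)"
proof (induction "size G + size H + size K" arbitrary: G H K rule: less_induct)
  case less
  have le_lf: "game_lf G K" if GH: "game_le G H" and HK: "game_lf H K"
    using HK
  proof (cases rule: game_lfE)
    case (right HR)
    with GH have "game_lf G HR" by (simp add: game_le_right_lf)
    with right show ?thesis using less[of G HR K] size_right_opt_less by fastforce
  next
    case (left KL)
    with GH have "game_le G KL" using less[of G H KL] size_left_opt_less by fastforce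
    with left show ?thesis by (blast intro: lf_left)
  next
    case (atom b c)
    from GH atom have "game_lf G H" by (simp add: game_le_atom_lf)
    then show ?thesis
    proof (cases rule: game_lfE)
      case (right GR)
      moreover have "game_le H K" using atom by (simp add: game_le_AtomI)
      ultimately have "game_le GR K" using less[of GR H K] size_right_opt_less by fastforce
      with right show ?thesis by (blast intro: lf_right)
    qed (use atom in \<open>auto intro: lf_atom\<close>)
  qed
  have lf_le: "game_lf G K" if GH: "game_lf G H" and HK: "game_le H K"
    using GH
  proof (cases rule: game_lfE)
    case (right GR)
    with HK have "game_le GR K" using less[of GR H K] size_right_opt_less by fastforce
    with right show ?thesis by (blast intro: lf_right)
  next
    case (left HL)
    with HK have "game_lf HL K" by (simp add: game_le_left_lf)
    with left show ?thesis using less[of G HL K] size_left_opt_less by fastforce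
  next
    case (atom a b)
    with HK have "game_lf H K" by (simp add: game_le_atom_lf)
    moreover have "game_le G H" using atom by (simp add: game_le_AtomI)
    ultimately show ?thesis using le_lf by blast
  qed
  have le_le: "game_le G K" if GH: "game_le G H" and HK: "game_le H K"
  proof (rule le_intro; intro allI impI)
    fix GL assume "GL |\<in>| left_opts G"
    with GH HK show "game_lf GL K"
      using less[of GL H K] size_left_opt_less game_le_left_lf by fastforce
  next
    fix KR assume "KR |\<in>| right_opts K"
    with GH HK show "game_lf G KR"
      using less[of G H KR] size_right_opt_less game_le_right_lf by fastforce
  next
    assume "is_atom G \<or> is_atom K"
    with GH HK show "game_lf G K" using game_le_atom_lf le_lf lf_le by blast
  qed
  show ?case using le_le le_lf lf_le by blast
qed

lemma game_le_trans: "game_le G H \<Longrightarrow> game_le H K \<Longrightarrow> game_le G K"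
  using game_le_lf_trans_all by blast

lemma game_le_lf_trans: "game_le G H \<Longrightarrow> game_lf H K \<Longrightarrow> game_lf G K"
  using game_le_lf_trans_all by blast

lemma game_lf_le_trans: "game_lf G H \<Longrightarrow> game_le H K \<Longrightarrow> game_lf G K"
  using game_le_lf_trans_all by blast

lemma canonical_left_undominated:
  "canonical G \<Longrightarrow> H |\<in>| left_opts G \<Longrightarrow> K |\<in>| left_opts G \<Longrightarrow> game_le K H \<Longrightarrow> H = K"
  by (auto elim: canonical.cases)

lemma canonical_right_undominated:
  "canonical G \<Longrightarrow> H |\<in>| right_opts G \<Longrightarrow> K |\<in>| right_opts G \<Longrightarrow> game_le H K \<Longrightarrow> H = K"
  by (erule canonical.cases) blast

lemma canonical_left_not_reversible:
  "canonical G \<Longrightarrow> H |\<in>| left_opts G \<Longrightarrow> K |\<in>| right_opts H \<Longrightarrow> \<not> game_le K G"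
  by (auto elim: canonical.cases)

lemma canonical_right_not_reversible:
  "canonical G \<Longrightarrow> H |\<in>| right_opts G \<Longrightarrow> K |\<in>| left_opts H \<Longrightarrow> \<not> game_le G K"
  by (auto elim: canonical.cases)

lemma canonical_left_opt_equiv_passable:
  fixes G' X :: "'a::order game"
  assumes canon: "canonical G'" and GL: "GL |\<in>| left_opts G'"
  shows "passable X \<Longrightarrow>
    (game_le GL X \<longrightarrow> game_lf X G' \<longrightarrow> (\<exists>Y. passable Y \<and> game_equiv GL Y)) \<and>
    (game_lf GL X \<longrightarrow> game_le X G' \<longrightarrow> (\<exists>Y. passable Y \<and> game_equiv GL Y))"
proof (induction X rule: passable.induct)
  case (1 X)
  note IH_left = "1"(2) and IH_right = "1"(3)
  have X: "passable X" using "1" by (blast intro: passable.intros)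
  have le_lf: "\<exists>Y. passable Y \<and> game_equiv GL Y" if GL_X: "game_le GL X" and X_G': "game_lf X G'"
    using X_G'
  proof (cases rule: game_lfE)
    case (right XR)
    with GL_X have "game_lf GL XR" by (simp add: game_le_right_lf)
    with right IH_right show ?thesis by blast
  next
    case (left KL)
    with GL_X have "KL = GL"
      using canonical_left_undominated[OF canon _ GL] game_le_trans by blast
    with left GL_X X show ?thesis unfolding game_equiv_def by blast
  qed (use GL in simp)
  have lf_le: "\<exists>Y. passable Y \<and> game_equiv GL Y" if GL_X: "game_lf GL X" and X_G': "game_le X G'"
    using GL_X
  proof (cases rule: game_lfE)
    case (right R)
    with X_G' show ?thesis using canonical_left_not_reversible[OF canon GL] game_le_trans by blast
  next
    case (left XL)
    with X_G' have "game_lf XL G'" by (simp add: game_le_left_lf)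
    with left IH_left show ?thesis by blast
  next
    case (atom a b)
    then have "game_le GL X" by (simp add: game_le_AtomI)
    moreover have "game_lf X G'" using X_G' atom by (simp add: game_le_atom_lf)
    ultimately show ?thesis by (rule le_lf)
  qed
  show ?case using le_lf lf_le by blast
qed

lemma canonical_right_opt_equiv_passable:
  fixes G' X :: "'a::order game"
  assumes canon: "canonical G'" and GR: "GR |\<in>| right_opts G'"
  shows "passable X \<Longrightarrow>
    (game_le X GR \<longrightarrow> game_lf G' X \<longrightarrow> (\<exists>Y. passable Y \<and> game_equiv GR Y)) \<and>
    (game_lf X GR \<longrightarrow> game_le G' X \<longrightarrow> (\<exists>Y. passable Y \<and> game_equiv GR Y))"
proof (induction X rule: passable.induct)
  case (1 X)
  note IH_left = "1"(2) and IH_right = "1"(3)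
  have X: "passable X" using "1" by (blast intro: passable.intros)
  have le_lf: "\<exists>Y. passable Y \<and> game_equiv GR Y" if X_GR: "game_le X GR" and G'_X: "game_lf G' X"
    using G'_X
  proof (cases rule: game_lfE)
    case (right KR)
    with X_GR have "KR = GR"
      using canonical_right_undominated[OF canon _ GR] game_le_trans by blast
    with right X_GR X show ?thesis unfolding game_equiv_def by blast
  next
    case (left XL)
    with X_GR have "game_lf XL GR" by (simp add: game_le_left_lf)
    with left IH_left show ?thesis by blast
  qed (use GR in simp)
  have lf_le: "\<exists>Y. passable Y \<and> game_equiv GR Y" if X_GR: "game_lf X GR" and G'_X: "game_le G' X"
    using X_GR
  proof (cases rule: game_lfE)
    case (right XR)
    with G'_X have "game_lf G' XR" by (simp add: game_le_right_lf)
    with right IH_right show ?thesis by blast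
  next
    case (left L)
    with G'_X show ?thesis using canonical_right_not_reversible[OF canon GR] game_le_trans by blast
  next
    case (atom a b)
    then have "game_le X GR" by (simp add: game_le_AtomI)
    moreover have "game_lf G' X" using G'_X atom by (simp add: game_le_atom_lf)
    ultimately show ?thesis by (rule le_lf)
  qed
  show ?case using le_lf lf_le by blast
qed

lemma canonical_passable_if_equiv_passable:
  fixes G' :: "'a::order game"
  assumes "canonical G'" and "game_equiv G' G" and "passable G"
  shows "passable G'"
  using assms
proof (induction G' arbitrary: G rule: canonical.induct)
  case (1 G')
  note IH_left = "1"(6) and IH_right = "1"(7)
  have canon: "canonical G'" using "1" by (blast intro: canonical.intros)
  from "1.prems"(1) have G'_G: "game_le G' G" and G_G': "game_le G G'" by (auto simp: game_equiv_def)
  from "1.prems"(2) have "game_lf G G" by (auto elim: passable.cases)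
  with G'_G G_G' have "game_lf G' G'" using game_le_lf_trans game_lf_le_trans by blast
  moreover have "passable GL" if GL: "GL |\<in>| left_opts G'" for GL
  proof -
    from G'_G GL have "game_lf GL G" by (simp add: game_le_left_lf)
    then obtain Y where "passable Y" "game_equiv GL Y"
      using canonical_left_opt_equiv_passable[OF canon GL "1.prems"(2)] G_G' by blast
    with GL IH_left show ?thesis by blast
  qed
  moreover have "passable GR" if GR: "GR |\<in>| right_opts G'" for GR
  proof -
    from G_G' GR have "game_lf G GR" by (simp add: game_le_right_lf)
    then obtain Y where "passable Y" "game_equiv GR Y"
      using canonical_right_opt_equiv_passable[OF canon GR "1.prems"(2)] G'_G by blast
    with GR IH_right show ?thesis by blast
  qed
  ultimately show ?case by (blast intro: passable.intros)
qed

theorem lemma6p3: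
  fixes G G' :: "'a::order game"
  assumes "wf_game G" and "wf_game G'"
    and "passable G"
    and "canonical G'" and "game_equiv G' G"
  shows "passable G'"
  using assms(4,5,3) by (rule canonical_passable_if_equiv_passable)

end
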